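(* (a) For all $t>0$, $|E(t)|<M(t)$. (b) There exist $t_0,t_1$ with $0<t_1<t_0<1$ such that $M(t)<\operatorname{arccot}t$ for all $t>t_0$ and $|E(t)|<\operatorname{arccot}t$ for all $t>t_1$. (c) For all $t\geq0$, $|\mathrm{si}(t)|\leq\operatorname{arccot}t$, with equality only for $t=0$.
   Context: For $t>0$, $E(t)=\int_0^\infty \frac{e^{iu}}{u+t}\,du$ (improper integral) and $M(t)=\int_0^\infty \frac{e^{-tu}}{\sqrt{u^2+1}}\,du$. The complementary sine integral is $\mathrm{si}(t)=-\int_t^\infty\frac{\sin u}{u}\,du$ for $t\ge0$ (so $\mathrm{si}(0)=-\pi/2$). *)

theory Defs
  imports "HOL-Analysis.Analysis"
begin

definition E :: "real \<Rightarrow> complex" where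
  "E t = Lim at_top (\<lambda>R::real. integral {0..R} (\<lambda>u::real. exp (\<i> * of_real u) / of_real (u + t)))"

text \<open>M(t) = integral over [0,oo) of e^{-tu}/sqrt(u^2+1) (absolutely convergent for t>0).\<close>
definition M :: "real \<Rightarrow> real" where
  "M t = integral {0..} (\<lambda>u::real. exp (- t * u) / sqrt (u\<^sup>2 + 1))"

definition si :: "real \<Rightarrow> real" where
  "si t = - Lim at_top (\<lambda>R::real. integral {t..R} (\<lambda>u::real. sin u / u))"

text \<open>Principal inverse cotangent, values in (0,pi); equals arctan(1/t) for t>0, pi/2 at 0.\<close>
definition arccot :: "real \<Rightarrow> real" where
  "arccot t = pi / 2 - arctan t"

end

(*
  (a) After exchanging the order of integration on finite rectangles, E(t) becomes the Laplace
  transform of 1/(x - i).  Its integrand has modulus exp(-tx)/sqrt(x^2+1), the integrand of M(t),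
  while its argument varies with x; hence |E(t)| < M(t).

  (b) arccot t is the Laplace transform of sinc, so arccot t - M(t) is the Laplace transform of
  h(x) = sinc x - 1/sqrt(x^2+1).  Since h >= 0 on [0, 9/5] and h <= 1/11 beyond, the transform at
  t >= t0 is at least exp(-(t - t0) 9/5) times its value at t0, up to a small correction.  A rigorous
  numerical bound M(99/100) <= 0.766 < pi/4 (Taylor bounds for exp, a quartic bound for
  1/sqrt(x^2+1) near 0 and chords of its convex part) makes this positive at t0 = 199/200, and also
  gives |E(t)| < M(t) <= M(99/100) < arccot t for 99/100 < t <= 199/200.

  (c) si(t) = -Im(exp(it) E(t)), so |si t| <= |E(t)| < arccot t for t > 99/100.  For smaller t,
  arctan t < Si t <= t < pi/2, whence |si t| = pi/2 - Si t < arccot t.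
*)
theory Submission
  imports Defs "HOL-Probability.Sinc_Integral" "HOL-Real_Asymp.Real_Asymp"
begin

section \<open>Laplace transforms on a half-line\<close>

lemma has_integral_exp_Ici:
  fixes t :: real
  assumes "0 < t"
  shows "((\<lambda>x. exp (-(t * x))) has_integral exp (-(t * a)) / t) {a..}"
  using has_integral_exp_minus_to_infinity[OF assms, of a] by simp

lemma integrable_on_Ici_exp_bound:
  fixes f :: "real \<Rightarrow> 'b::euclidean_space"
  assumes f: "continuous_on {a..} f" and t: "0 < t"
    and bound: "\<And>x. a \<le> x \<Longrightarrow> norm (f x) \<le> C * exp (-(t * x))"
  shows "f integrable_on {a..}"
proof -
  have "f absolutely_integrable_on {a..}"
  proof (rule measurable_bounded_by_integrable_imp_absolutely_integrable)
    show "f \<in> borel_measurable (lebesgue_on {a..})"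
      by (rule continuous_imp_measurable_on_sets_lebesgue[OF f]) auto
    show "(\<lambda>x. C * exp (-(t * x))) integrable_on {a..}"
      using has_integral_mult_right[OF has_integral_exp_Ici[OF t]] by blast
  qed (use bound in auto)
  then show ?thesis
    by (simp add: absolutely_integrable_on_def)
qed

lemma norm_integral_Ici_exp_bound:
  fixes f :: "real \<Rightarrow> 'b::euclidean_space"
  assumes f: "continuous_on {a..} f" and t: "0 < t"
    and bound: "\<And>x. a \<le> x \<Longrightarrow> norm (f x) \<le> C * exp (-(t * x))"
  shows "norm (integral {a..} f) \<le> C * exp (-(t * a)) / t"
proof -
  have C: "((\<lambda>x. C * exp (-(t * x))) has_integral C * exp (-(t * a)) / t) {a..}"
    using has_integral_mult_right[OF has_integral_exp_Ici[OF t]] by simp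
  show ?thesis
    by (rule integral_norm_bound_integral[OF integrable_on_Ici_exp_bound[OF assms],
          of "\<lambda>x. C * exp (-(t * x))", unfolded integral_unique[OF C]])
       (use C bound in auto)
qed

lemma integral_Ici_split:
  fixes f :: "real \<Rightarrow> 'b::euclidean_space"
  assumes "f integrable_on {a..b}" "f integrable_on {b..}" "a \<le> b"
  shows "integral {a..} f = integral {a..b} f + integral {b..} f"
proof -
  have "{a..b} \<inter> {b..} = {b}" "{a..b} \<union> {b..} = {a..}"
    using assms(3) by auto
  then show ?thesis
    using has_integral_Un[OF integrable_integral[OF assms(1)] integrable_integral[OF assms(2)]]
    by (metis integral_unique negligible_sing)
qed

lemma integral_Ici_pos:
  fixes k :: "real \<Rightarrow> real"
  assumes k: "continuous_on {a..} k" "k integrable_on {a..}" "\<And>x. a \<le> x \<Longrightarrow> 0 \<le> k x"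
    and x0: "a \<le> x0" "0 < k x0"
  shows "0 < integral {a..} k"
proof -
  have sub: "{a..x0 + 1} \<subseteq> {a..}"
    by auto
  have cont: "continuous_on {a..x0 + 1} k"
    using continuous_on_subset[OF k(1) sub] .
  have int: "k integrable_on {a..x0 + 1}"
    using cont by (rule integrable_continuous_interval)
  have "integral {a..x0 + 1} k \<noteq> 0"
  proof
    assume "integral {a..x0 + 1} k = 0"
    then have "(k has_integral 0) (cbox a (x0 + 1))"
      using int by (metis box_real(2) has_integral_integral)
    then have "k x0 = 0"
      using cont k x0 by (intro has_integral_0_cbox_imp_0[of a "x0 + 1" k]) auto
    with x0 show False
      by simp
  qed
  moreover have "0 \<le> integral {a..x0 + 1} k"
    using int k by (intro integral_nonneg) auto
  moreover have "integral {a..x0 + 1} k \<le> integral {a..} k"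
    using sub int k by (intro integral_subset_le) auto
  ultimately show ?thesis
    by linarith
qed

lemma tendsto_integral_Icc_Ici_exp_bound:
  fixes f :: "real \<Rightarrow> 'b::euclidean_space"
  assumes f: "continuous_on {a..} f" and t: "0 < t"
    and bound: "\<And>x. a \<le> x \<Longrightarrow> norm (f x) \<le> C * exp (-(t * x))"
  shows "((\<lambda>y. integral {a..y} f) \<longlongrightarrow> integral {a..} f) at_top"
proof -
  have "\<forall>\<^sub>F y in at_top. norm (integral {a..y} f - integral {a..} f) \<le> C * exp (-(t * y)) / t"
    using eventually_ge_at_top[of a]
  proof eventually_elim
    case (elim y)
    have fy: "continuous_on {y..} f"
      using f elim by (auto intro: continuous_on_subset)
    have "integral {a..} f = integral {a..y} f + integral {y..} f"
      using elim f bound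
      by (intro integral_Ici_split integrable_on_Ici_exp_bound[OF fy t, where C=C] integrable_continuous_interval)
         (auto intro: continuous_on_subset)
    then have "norm (integral {a..y} f - integral {a..} f) = norm (integral {y..} f)"
      by (simp add: norm_minus_commute)
    also have "\<dots> \<le> C * exp (-(t * y)) / t"
      using elim bound by (intro norm_integral_Ici_exp_bound[OF fy t]) auto
    finally show ?case .
  qed
  moreover have "((\<lambda>y. C * exp (-(t * y)) / t) \<longlongrightarrow> 0) at_top"
    using t by real_asymp
  ultimately have "((\<lambda>y. integral {a..y} f - integral {a..} f) \<longlongrightarrow> 0) at_top"
    by (rule Lim_null_comparison)
  then show ?thesis
    by (simp add: LIM_zero_iff)
qed

lemma integral_Icc_antiderivative:
  fixes f F :: "real \<Rightarrow> 'a::banach"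
  assumes "a \<le> b" "\<And>x. x \<in> {a..b} \<Longrightarrow> (F has_vector_derivative f x) (at x within {a..b})"
  shows "integral {a..b} f = F b - F a"
  using fundamental_theorem_of_calculus[OF assms] by (rule integral_unique)

lemma integral_swap_Icc:
  fixes f :: "real \<Rightarrow> real \<Rightarrow> 'c::banach"
  assumes "continuous_on ({a..b} \<times> {c..d}) (\<lambda>(x, y). f x y)"
  shows "integral {a..b} (\<lambda>x. integral {c..d} (f x)) = integral {c..d} (\<lambda>y. integral {a..b} (\<lambda>x. f x y))"
  using integral_swap_continuous[of a c b d f] assms by (simp add: cbox_Pair_eq)

lemma integral_exp_Icc:
  fixes s X :: real
  assumes "s \<noteq> 0" "0 \<le> X"
  shows "integral {0..X} (\<lambda>x. exp (-(s * x))) = (1 - exp (-(s * X))) / s"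
proof -
  have "integral {0..X} (\<lambda>x. exp (-(s * x))) = - exp (-(s * X)) / s - - exp (-(s * 0)) / s"
    using assms
    by (intro integral_Icc_antiderivative)
       (auto intro!: derivative_eq_intros simp flip: has_real_derivative_iff_has_vector_derivative)
  then show ?thesis
    by (simp add: diff_divide_distrib)
qed

lemma integral_exp_Icc_le:
  fixes s X :: real
  assumes "0 < s" "0 \<le> X"
  shows "integral {0..X} (\<lambda>x. exp (-(s * x))) \<le> 1 / s"
  using assms by (simp add: integral_exp_Icc divide_right_mono)

section \<open>The Laplace transform of sinc\<close>

lemma abs_sinc_le_1: "\<bar>sinc x\<bar> \<le> 1"
  using abs_sin_x_le_abs_x[of x] by (simp add: abs_divide divide_le_eq_1)

lemma integral_exp_sin_Icc:
  fixes s X :: real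
  assumes "0 \<le> X"
  shows "integral {0..X} (\<lambda>x. exp (-(s * x)) * sin x)
       = (1 - exp (-(s * X)) * (s * sin X + cos X)) / (1 + s\<^sup>2)"
proof -
  have pos: "1 + s\<^sup>2 \<noteq> 0"
    using zero_le_power2[of s] by linarith
  let ?F = "\<lambda>x. - exp (-(s * x)) * (s * sin x + cos x) / (1 + s\<^sup>2)"
  have "integral {0..X} (\<lambda>x. exp (-(s * x)) * sin x) = ?F X - ?F 0"
    using assms pos
    by (intro integral_Icc_antiderivative)
       (auto intro!: derivative_eq_intros simp flip: has_real_derivative_iff_has_vector_derivative,
        simp_all add: field_simps power2_eq_square)
  then show ?thesis
    using pos by (simp add: field_simps)
qed

text \<open>Writing \<open>sinc x * (1 - exp (-(U * x)))\<close> as the integral of \<open>exp (-(u * x)) * sin x\<close> over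
  \<open>u \<in> [0, U]\<close> and exchanging the order of integration:\<close>

lemma integral_exp_sinc_Icc_swap:
  fixes t U X :: real
  assumes U: "0 \<le> U" and X: "0 \<le> X"
  shows "integral {0..X} (\<lambda>x. exp (-(t * x)) * sinc x * (1 - exp (-(U * x))))
       = integral {0..U} (\<lambda>u. (1 - exp (-((t + u) * X)) * ((t + u) * sin X + cos X)) / (1 + (t + u)\<^sup>2))"
proof -
  let ?f = "\<lambda>x u. exp (-((t + u) * x)) * sin x"
  have inner_u: "integral {0..U} (?f x) = exp (-(t * x)) * sinc x * (1 - exp (-(U * x)))" for x
  proof (cases "x = 0")
    case False
    let ?F = "\<lambda>u. - exp (-((t + u) * x)) * sin x / x"
    have "integral {0..U} (?f x) = ?F U - ?F 0"
      using U False
      by (intro integral_Icc_antiderivative)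
         (auto intro!: derivative_eq_intros simp flip: has_real_derivative_iff_has_vector_derivative)
    also have "\<dots> = exp (-(t * x)) * sinc x * (1 - exp (-(U * x)))"
      using False by (simp add: field_simps exp_add[symmetric])
    finally show ?thesis .
  qed simp
  have "integral {0..X} (\<lambda>x. exp (-(t * x)) * sinc x * (1 - exp (-(U * x))))
      = integral {0..X} (\<lambda>x. integral {0..U} (?f x))"
    by (intro integral_cong) (rule inner_u[symmetric])
  also have "\<dots> = integral {0..U} (\<lambda>u. integral {0..X} (\<lambda>x. ?f x u))"
    by (rule integral_swap_Icc) (auto simp: case_prod_unfold intro!: continuous_intros)
  also have "\<dots> = integral {0..U} (\<lambda>u. (1 - exp (-((t + u) * X)) * ((t + u) * sin X + cos X)) / (1 + (t + u)\<^sup>2))"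
    using integral_exp_sin_Icc[OF X] by simp
  finally show ?thesis .
qed

lemma integral_exp_sinc_Icc_eq:
  fixes t U X :: real
  assumes U: "0 \<le> U" and X: "0 \<le> X"
  shows "integral {0..X} (\<lambda>x. exp (-(t * x)) * sinc x)
       = arctan (t + U) - arctan t + integral {0..X} (\<lambda>x. exp (-((t + U) * x)) * sinc x)
         - integral {0..U} (\<lambda>u. exp (-((t + u) * X)) * ((t + u) * sin X + cos X) / (1 + (t + u)\<^sup>2))"
proof -
  let ?r = "\<lambda>u. exp (-((t + u) * X)) * ((t + u) * sin X + cos X) / (1 + (t + u)\<^sup>2)"
  have pos: "1 + (t + u)\<^sup>2 \<noteq> 0" for u :: real
    using zero_le_power2[of "t + u"] by linarith
  have "integral {0..X} (\<lambda>x. exp (-(t * x)) * sinc x) - integral {0..X} (\<lambda>x. exp (-((t + U) * x)) * sinc x)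
      = integral {0..X} (\<lambda>x. exp (-(t * x)) * sinc x * (1 - exp (-(U * x))))"
    by (subst integral_diff[symmetric])
       (auto intro!: integrable_continuous_interval continuous_intros integral_cong
             simp: algebra_simps simp flip: exp_add)
  also have "\<dots> = integral {0..U} (\<lambda>u. 1 / (1 + (t + u)\<^sup>2) - ?r u)"
    using U X by (simp add: integral_exp_sinc_Icc_swap diff_divide_distrib)
  also have "\<dots> = integral {0..U} (\<lambda>u. 1 / (1 + (t + u)\<^sup>2)) - integral {0..U} ?r"
    using pos by (intro integral_diff integrable_continuous_interval continuous_intros) auto
  also have "integral {0..U} (\<lambda>u. 1 / (1 + (t + u)\<^sup>2)) = arctan (t + U) - arctan (t + 0)"
    using U
    by (intro integral_Icc_antiderivative)
       (auto intro!: derivative_eq_intros simp flip: has_real_derivative_iff_has_vector_derivative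
             simp: power2_eq_square inverse_eq_divide)
  finally show ?thesis
    by simp
qed

lemma integral_exp_sinc_Icc_approx:
  fixes t U X :: real
  assumes t: "0 < t" and U: "0 < U" and X: "0 \<le> X"
  shows "\<bar>integral {0..X} (\<lambda>x. exp (-(t * x)) * sinc x) - (arctan (t + U) - arctan t)\<bar>
         \<le> 1 / U + 2 * U * exp (-(t * X))"
proof -
  let ?k = "\<lambda>x. exp (-((t + U) * x)) * sinc x"
  let ?r = "\<lambda>u. exp (-((t + u) * X)) * ((t + u) * sin X + cos X) / (1 + (t + u)\<^sup>2)"
  have pos: "1 + (t + u)\<^sup>2 \<noteq> 0" for u :: real
    using zero_le_power2[of "t + u"] by linarith
  have "norm (integral {0..X} ?k) \<le> integral {0..X} (\<lambda>x. exp (-((t + U) * x)))"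
    using abs_sinc_le_1
    by (intro integral_norm_bound_integral integrable_continuous_interval continuous_intros)
       (auto simp: abs_mult mult_left_le)
  also have "\<dots> \<le> 1 / (t + U)"
    using t U X by (intro integral_exp_Icc_le) auto
  also have "\<dots> \<le> 1 / U"
    using t U by (intro divide_left_mono) auto
  finally have k: "\<bar>integral {0..X} ?k\<bar> \<le> 1 / U"
    by simp
  have "norm (integral {0..U} ?r) \<le> integral {0..U} (\<lambda>u. 2 * exp (-(t * X)))"
  proof (rule integral_norm_bound_integral)
    fix u assume u: "u \<in> {0..U}"
    define s where "s = t + u"
    have "s > 0"
      using t u by (simp add: s_def)
    have "\<bar>s * sin X + cos X\<bar> \<le> s * 1 + 1"
      using \<open>s > 0\<close> abs_sin_le_one[of X] abs_cos_le_one[of X]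
      by (intro order.trans[OF abs_triangle_ineq] add_mono) (auto simp: abs_mult)
    also have "\<dots> \<le> 2 * (1 + s\<^sup>2)"
      using zero_le_power2[of "s - 1/4"] by (simp add: power2_eq_square algebra_simps)
    finally have "\<bar>s * sin X + cos X\<bar> / (1 + s\<^sup>2) \<le> 2"
      by (simp add: divide_le_eq add_pos_nonneg)
    moreover have "exp (-(s * X)) \<le> exp (-(t * X))"
      using u X by (simp add: s_def mult_right_mono algebra_simps)
    ultimately have "exp (-(s * X)) * (\<bar>s * sin X + cos X\<bar> / (1 + s\<^sup>2)) \<le> exp (-(t * X)) * 2"
      by (intro mult_mono) auto
    then show "norm (?r u) \<le> 2 * exp (-(t * X))"
      by (simp add: s_def abs_mult abs_divide add_pos_nonneg mult.commute)
  qed (use pos in \<open>auto intro!: integrable_continuous_interval continuous_intros\<close>)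
  then have r: "\<bar>integral {0..U} ?r\<bar> \<le> 2 * U * exp (-(t * X))"
    using U by simp
  show ?thesis
    using integral_exp_sinc_Icc_eq[of U X t] U X k r by linarith
qed

theorem has_integral_exp_sinc:
  fixes t :: real
  assumes t: "0 < t"
  shows "((\<lambda>x. exp (-(t * x)) * sinc x) has_integral arccot t) {0..}"
proof -
  let ?g = "\<lambda>x. exp (-(t * x)) * sinc x"
  have cont: "continuous_on {0..} ?g"
    by (intro continuous_intros)
  have bound: "norm (?g x) \<le> 1 * exp (-(t * x))" for x
    using abs_sinc_le_1[of x] by (simp add: abs_mult mult_le_cancel_left1)
  define S where "S = integral {0..} ?g"
  have lim: "((\<lambda>X. integral {0..X} ?g) \<longlongrightarrow> S) at_top"
    unfolding S_def by (rule tendsto_integral_Icc_Ici_exp_bound[OF cont t bound])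
  have U: "\<bar>S - (arctan (t + U) - arctan t)\<bar> \<le> 1 / U" if "0 < U" for U
  proof (rule tendsto_le[OF trivial_limit_at_top_linorder])
    show "((\<lambda>X. 1 / U + 2 * U * exp (-(t * X))) \<longlongrightarrow> 1 / U) at_top"
      using t by real_asymp
    show "\<forall>\<^sub>F X in at_top. \<bar>integral {0..X} ?g - (arctan (t + U) - arctan t)\<bar> \<le> 1 / U + 2 * U * exp (-(t * X))"
      using eventually_ge_at_top[of 0] by eventually_elim (rule integral_exp_sinc_Icc_approx[OF t that])
  qed (intro tendsto_intros lim)
  have "\<bar>S - arccot t\<bar> \<le> 0"
  proof (rule tendsto_le[OF trivial_limit_at_top_linorder])
    have "((\<lambda>U. arctan (t + U)) \<longlongrightarrow> pi / 2) at_top"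
      by (rule filterlim_compose[OF tendsto_arctan_at_top]) real_asymp
    moreover have "((\<lambda>U::real. 1 / U) \<longlongrightarrow> 0) at_top"
      by real_asymp
    ultimately have "((\<lambda>U. 1 / U + (pi / 2 - arctan (t + U))) \<longlongrightarrow> 0 + (pi / 2 - pi / 2)) at_top"
      by (intro tendsto_intros)
    then show "((\<lambda>U. 1 / U + (pi / 2 - arctan (t + U))) \<longlongrightarrow> 0) at_top"
      by simp
    show "\<forall>\<^sub>F U in at_top. \<bar>S - arccot t\<bar> \<le> 1 / U + (pi / 2 - arctan (t + U))"
      using eventually_gt_at_top[of 0]
    proof eventually_elim
      case (elim U)
      show ?case
        using U[OF elim] arctan_ubound[of "t + U"] unfolding arccot_def abs_le_iff by linarith
    qed
  qed simp
  then show ?thesis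
    using integrable_on_Ici_exp_bound[OF cont t bound] by (simp add: S_def has_integral_iff)
qed

section \<open>\<open>E\<close> as a Laplace transform\<close>

lemma power2_plus_1_neq_0 [simp]: "x\<^sup>2 + 1 \<noteq> (0::real)"
  using zero_le_power2[of x] by linarith

definition inv_hypot :: "real \<Rightarrow> real" where
  "inv_hypot x = 1 / sqrt (x\<^sup>2 + 1)"

lemma inv_hypot_pos: "0 < inv_hypot x"
  by (simp add: inv_hypot_def add_nonneg_pos)

lemma inv_hypot_le_1: "inv_hypot x \<le> 1"
  by (simp add: inv_hypot_def divide_le_eq_1 add_nonneg_pos)

lemma continuous_on_inv_hypot: "continuous_on A inv_hypot"
  unfolding inv_hypot_def by (intro continuous_intros) (simp add: add_nonneg_pos)

lemma x_minus_i_neq_0: "complex_of_real x - \<i> \<noteq> 0"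
  by (simp add: complex_eq_iff)

lemma norm_exp_div_x_minus_i:
  "cmod (of_real (exp (-(t * x))) / (of_real x - \<i>)) = exp (-(t * x)) * inv_hypot x"
  unfolding norm_divide by (simp add: cmod_def inv_hypot_def)

lemma integral_Icc_exp_x_minus_i_dx:
  fixes t u X :: real
  assumes "u + t \<noteq> 0" "0 \<le> X"
  shows "integral {0..X} (\<lambda>x. exp (- of_real u * (of_real x - \<i>)) * of_real (exp (-(t * x))))
         = exp (\<i> * of_real u) / of_real (u + t)
           - exp (\<i> * of_real u) * of_real (exp (-((u + t) * X)) / (u + t))"
proof -
  have integrand: "exp (- of_real u * (of_real x - \<i>)) * of_real (exp (-(t * x)))
                 = exp (\<i> * of_real u) * of_real (exp (-((u + t) * x)))" for x
  proof -
    have "exp (- of_real u * (of_real x - \<i>)) * of_real (exp (-(t * x)))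
          = exp (- of_real u * (of_real x - \<i>) + of_real (-(t * x)))"
      by (simp only: exp_add exp_of_real)
    also have "- of_real u * (of_real x - \<i>) + of_real (-(t * x)) = \<i> * of_real u + of_real (-((u + t) * x))"
      by (simp add: algebra_simps)
    finally show ?thesis
      by (simp only: exp_add exp_of_real)
  qed
  have "(\<lambda>x. exp (-((u + t) * x))) integrable_on {0..X}"
    by (intro integrable_continuous_interval continuous_intros)
  from integrable_integral[OF this]
  have "((\<lambda>x. exp (-((u + t) * x))) has_integral (1 - exp (-((u + t) * X))) / (u + t)) {0..X}"
    unfolding integral_exp_Icc[OF assms] .
  then have "integral {0..X} (\<lambda>x. complex_of_real (exp (-((u + t) * x))))
           = of_real ((1 - exp (-((u + t) * X))) / (u + t))"
    by (intro integral_unique has_integral_of_real)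
  then show ?thesis
    unfolding integrand integral_mult_right by (simp add: diff_divide_distrib right_diff_distrib)
qed

lemma integral_Icc_exp_x_minus_i_du:
  fixes t R x :: real
  assumes "0 \<le> R"
  shows "integral {0..R} (\<lambda>u. exp (- of_real u * (of_real x - \<i>)) * of_real (exp (-(t * x))))
         = of_real (exp (-(t * x))) / (of_real x - \<i>)
           - exp (- of_real R * (of_real x - \<i>)) / (of_real x - \<i>) * of_real (exp (-(t * x)))"
proof -
  define w where "w = complex_of_real x - \<i>"
  have "w \<noteq> 0"
    by (simp add: w_def complex_eq_iff)
  have "integral {0..R} (\<lambda>u. exp (- of_real u * w) * of_real (exp (-(t * x))))
        = - exp (- of_real R * w) / w * of_real (exp (-(t * x))) - - exp (- of_real 0 * w) / w * of_real (exp (-(t * x)))"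
  proof (rule integral_Icc_antiderivative[OF assms])
    fix u
    have "((\<lambda>z. - exp (- z * w) / w * of_real (exp (-(t * x)))) has_field_derivative
            exp (- of_real u * w) * of_real (exp (-(t * x)))) (at (of_real u))"
      using \<open>w \<noteq> 0\<close> by (auto intro!: derivative_eq_intros)
    then show "((\<lambda>u. - exp (- of_real u * w) / w * of_real (exp (-(t * x)))) has_vector_derivative
                 exp (- of_real u * w) * of_real (exp (-(t * x)))) (at u within {0..R})"
      by (rule has_vector_derivative_real_field)
  qed
  then show ?thesis
    by (simp add: w_def)
qed

lemma E_partial_integral_swap:
  fixes t R X :: real
  assumes t: "0 < t" and R: "0 \<le> R" and X: "0 \<le> X"
  shows "integral {0..R} (\<lambda>u. exp (\<i> * of_real u) / of_real (u + t))
           - integral {0..X} (\<lambda>x. of_real (exp (-(t * x))) / (of_real x - \<i>))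
         = integral {0..R} (\<lambda>u. exp (\<i> * of_real u) * of_real (exp (-((u + t) * X)) / (u + t)))
           - integral {0..X} (\<lambda>x. exp (- of_real R * (of_real x - \<i>)) / (of_real x - \<i>) * of_real (exp (-(t * x))))"
proof -
  let ?f = "\<lambda>u x. exp (- of_real u * (of_real x - \<i>)) * of_real (exp (-(t * x)))"
  let ?a = "\<lambda>u. exp (\<i> * of_real u) / of_real (u + t)"
  let ?b = "\<lambda>u. exp (\<i> * of_real u) * of_real (exp (-((u + t) * X)) / (u + t))"
  let ?J = "\<lambda>x. of_real (exp (-(t * x))) / (of_real x - \<i>)"
  let ?K = "\<lambda>x. exp (- of_real R * (of_real x - \<i>)) / (of_real x - \<i>) * of_real (exp (-(t * x)))"
  have "integral {0..R} ?a - integral {0..R} ?b = integral {0..R} (\<lambda>u. ?a u - ?b u)"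
    using t by (intro integral_diff[symmetric] integrable_continuous_interval continuous_intros)
               (auto simp: complex_eq_iff)
  also have "\<dots> = integral {0..R} (\<lambda>u. integral {0..X} (?f u))"
    using t X by (intro integral_cong integral_Icc_exp_x_minus_i_dx[symmetric]) auto
  also have "\<dots> = integral {0..X} (\<lambda>x. integral {0..R} (\<lambda>u. ?f u x))"
    by (rule integral_swap_Icc) (auto simp: case_prod_unfold intro!: continuous_intros)
  also have "\<dots> = integral {0..X} (\<lambda>x. ?J x - ?K x)"
    using R by (intro integral_cong integral_Icc_exp_x_minus_i_du)
  also have "\<dots> = integral {0..X} ?J - integral {0..X} ?K"
    by (intro integral_diff integrable_continuous_interval continuous_intros) (auto simp: complex_eq_iff)
  finally show ?thesis
    by (simp add: algebra_simps)
qed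

lemma E_partial_integral_approx:
  fixes t R X :: real
  assumes t: "0 < t" and R: "0 \<le> R" and X: "0 \<le> X"
  shows "norm (integral {0..R} (\<lambda>u. exp (\<i> * of_real u) / of_real (u + t))
               - integral {0..X} (\<lambda>x. of_real (exp (-(t * x))) / (of_real x - \<i>)))
         \<le> R * exp (-(t * X)) / t + 1 / (R + t)"
proof -
  let ?b = "\<lambda>u. exp (\<i> * of_real u) * of_real (exp (-((u + t) * X)) / (u + t))"
  let ?K = "\<lambda>x. exp (- of_real R * (of_real x - \<i>)) / (of_real x - \<i>) * of_real (exp (-(t * x)))"
  have "norm (integral {0..R} ?b) \<le> integral {0..R} (\<lambda>u. exp (-(t * X)) / t)"
  proof (rule integral_norm_bound_integral)
    fix u assume u: "u \<in> {0..R}"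
    have "norm (?b u) = exp (-((u + t) * X)) / (u + t)"
      using u t by (simp add: norm_mult del: of_real_divide)
    also have "\<dots> \<le> exp (-(t * X)) / t"
      using u t X by (intro frac_le) (auto simp: mult_right_mono algebra_simps)
    finally show "norm (?b u) \<le> exp (-(t * X)) / t" .
  qed (use t in \<open>auto intro!: integrable_continuous_interval continuous_intros simp: complex_eq_iff\<close>)
  then have b: "norm (integral {0..R} ?b) \<le> R * exp (-(t * X)) / t"
    using R by simp
  have "norm (integral {0..X} ?K) \<le> integral {0..X} (\<lambda>x. exp (-((R + t) * x)))"
  proof (rule integral_norm_bound_integral)
    fix x assume x: "x \<in> {0..X}"
    have "norm (?K x) = exp (-(R * x)) / cmod (of_real x - \<i>) * exp (-(t * x))"
      by (simp add: norm_mult norm_divide)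
    also have "\<dots> \<le> exp (-(R * x)) / 1 * exp (-(t * x))"
      by (intro mult_right_mono divide_left_mono) (auto simp: cmod_def add_nonneg_pos)
    finally show "norm (?K x) \<le> exp (-((R + t) * x))"
      by (simp add: algebra_simps flip: exp_add)
  qed (auto intro!: integrable_continuous_interval continuous_intros simp: complex_eq_iff)
  also have "\<dots> \<le> 1 / (R + t)"
    using t R X by (intro integral_exp_Icc_le) auto
  finally show ?thesis
    unfolding E_partial_integral_swap[OF t R X]
    using b norm_triangle_ineq4[of "integral {0..R} ?b" "integral {0..X} ?K"] by linarith
qed

lemma
  fixes t :: real
  assumes t: "0 < t"
  shows tendsto_E_partial_integral:
      "((\<lambda>R. integral {0..R} (\<lambda>u. exp (\<i> * of_real u) / of_real (u + t))) \<longlongrightarrow> E t) at_top"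
    and E_eq_integral: "E t = integral {0..} (\<lambda>x. of_real (exp (-(t * x))) / (of_real x - \<i>))"
proof -
  let ?J = "\<lambda>x. of_real (exp (-(t * x))) / (of_real x - \<i>)"
  let ?L = "integral {0..} ?J"
  have J: "continuous_on {0..} ?J" "norm (?J x) \<le> 1 * exp (-(t * x))" for x
    using x_minus_i_neq_0 inv_hypot_le_1[of x]
    by (auto intro!: continuous_intros simp: norm_exp_div_x_minus_i mult_left_le)
  have "norm (integral {0..R} (\<lambda>u. exp (\<i> * of_real u) / of_real (u + t)) - ?L) \<le> 1 / (R + t)"
    if R: "0 \<le> R" for R
  proof (rule tendsto_le[OF trivial_limit_at_top_linorder])
    show "((\<lambda>X. R * exp (-(t * X)) / t + 1 / (R + t)) \<longlongrightarrow> 1 / (R + t)) at_top"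
      using t by real_asymp
    show "\<forall>\<^sub>F X in at_top. norm (integral {0..R} (\<lambda>u. exp (\<i> * of_real u) / of_real (u + t)) - integral {0..X} ?J)
            \<le> R * exp (-(t * X)) / t + 1 / (R + t)"
      using eventually_ge_at_top[of 0] by eventually_elim (rule E_partial_integral_approx[OF t R])
  qed (intro tendsto_intros tendsto_integral_Icc_Ici_exp_bound[OF J(1) t J(2)])
  then have "\<forall>\<^sub>F R in at_top. norm (integral {0..R} (\<lambda>u. exp (\<i> * of_real u) / of_real (u + t)) - ?L) \<le> 1 / (R + t)"
    by (rule eventually_mono[OF eventually_ge_at_top[of 0]])
  moreover have "((\<lambda>R. 1 / (R + t)) \<longlongrightarrow> 0) at_top"
    by real_asymp
  ultimately have "((\<lambda>R. integral {0..R} (\<lambda>u. exp (\<i> * of_real u) / of_real (u + t)) - ?L) \<longlongrightarrow> 0) at_top"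
    by (rule Lim_null_comparison)
  then have lim: "((\<lambda>R. integral {0..R} (\<lambda>u. exp (\<i> * of_real u) / of_real (u + t))) \<longlongrightarrow> ?L) at_top"
    by (simp add: LIM_zero_iff)
  then show "E t = ?L"
    unfolding E_def by (rule tendsto_Lim[OF trivial_limit_at_top_linorder])
  with lim show "((\<lambda>R. integral {0..R} (\<lambda>u. exp (\<i> * of_real u) / of_real (u + t))) \<longlongrightarrow> E t) at_top"
    by simp
qed

section \<open>Comparison of \<open>E\<close> and \<open>M\<close>\<close>

lemma M_eq_integral_inv_hypot: "M t = integral {0..} (\<lambda>x. exp (-(t * x)) * inv_hypot x)"
  unfolding M_def inv_hypot_def by simp

lemma integrable_on_exp_inv_hypot:
  fixes t :: real
  assumes "0 < t"
  shows "(\<lambda>x. exp (-(t * x)) * inv_hypot x) integrable_on {a..}"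
  using inv_hypot_pos inv_hypot_le_1
  by (intro integrable_on_Ici_exp_bound[OF _ assms, where C = 1] continuous_intros continuous_on_inv_hypot)
     (simp add: abs_mult less_imp_le)

lemma M_antimono:
  assumes "0 < s" "s \<le> t"
  shows "M t \<le> M s"
  unfolding M_eq_integral_inv_hypot using assms inv_hypot_pos
  by (intro integral_le integrable_on_exp_inv_hypot mult_right_mono) (auto intro: less_imp_le mult_right_mono)

lemma Re_less_norm_mult_exp_div_x_minus_i:
  fixes c :: complex and t :: real
  assumes "c \<noteq> 0"
  shows "\<exists>x \<in> {1, 2}. Re (c * (of_real (exp (-(t * x))) / (of_real x - \<i>)))
                        < cmod (c * (of_real (exp (-(t * x))) / (of_real x - \<i>)))"
proof (rule ccontr)
  let ?w = "\<lambda>x. c * (of_real (exp (-(t * x))) / (of_real x - \<i>))"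
  have Im_w: "Im (?w x) = exp (-(t * x)) / (x\<^sup>2 + 1) * (x * Im c + Re c)" for x
  proof -
    define w where "w = of_real (exp (-(t * x))) / (of_real x - \<i>)"
    have "Re w = exp (-(t * x)) * x / (x\<^sup>2 + 1)" "Im w = exp (-(t * x)) / (x\<^sup>2 + 1)"
      by (simp_all add: w_def Re_divide Im_divide)
    then have "Im (c * w) = exp (-(t * x)) / (x\<^sup>2 + 1) * (x * Im c + Re c)"
      by (simp add: algebra_simps add_divide_distrib)
    then show ?thesis
      unfolding w_def .
  qed
  have Im_zero: "Im (?w x) = 0" if "\<not> Re (?w x) < cmod (?w x)" for x
  proof -
    have "(cmod (?w x))\<^sup>2 = (Re (?w x))\<^sup>2 + (Im (?w x))\<^sup>2"
      by (simp add: cmod_power2)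
    with that complex_Re_le_cmod[of "?w x"] show ?thesis
      by simp
  qed
  assume "\<not> (\<exists>x \<in> {1, 2}. Re (?w x) < cmod (?w x))"
  then have "Im c + Re c = 0" "2 * Im c + Re c = 0"
    using Im_zero[of 1] Im_zero[of 2] unfolding Im_w by auto
  then have "c = 0"
    by (simp add: complex_eq_iff)
  with assms show False ..
qed

lemma ex_unimodular_rotation_to_norm: "\<exists>c. cmod c = 1 \<and> c * z = of_real (cmod z)"
proof (cases "z = 0")
  case False
  define c where "c = cnj z / of_real (cmod z)"
  have "cmod c = 1"
    using False by (simp add: c_def norm_divide)
  moreover have "c * z = of_real ((cmod z)\<^sup>2) / of_real (cmod z)"
    unfolding c_def complex_norm_square by (simp only: divide_inverse ac_simps)
  ultimately show ?thesis
    using False by (auto simp: power2_eq_square)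
qed (auto intro: exI[of _ 1])

text \<open>Rotating \<open>E t\<close> onto the positive real axis by a unimodular \<open>c\<close> turns \<open>M t - cmod (E t)\<close>
  into the integral of \<open>cmod (c * g x) - Re (c * g x) \<ge> 0\<close>, where \<open>g x = e\<^sup>-\<^sup>t\<^sup>x / (x - \<i>)\<close>;
  this integrand is positive at \<open>x = 1\<close> or at \<open>x = 2\<close>.\<close>

theorem norm_E_less_M:
  fixes t :: real
  assumes t: "0 < t"
  shows "cmod (E t) < M t"
proof -
  let ?g = "\<lambda>x. of_real (exp (-(t * x))) / (of_real x - \<i>)"
  obtain c where c: "cmod c = 1" "c * E t = cmod (E t)"
    using ex_unimodular_rotation_to_norm by blast
  have norm_cg: "cmod (c * ?g x) = exp (-(t * x)) * inv_hypot x" for x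
    unfolding norm_mult c(1) norm_exp_div_x_minus_i by simp
  have cg_cont: "continuous_on {0..} (\<lambda>x. c * ?g x)"
    using x_minus_i_neq_0 by (intro continuous_intros) auto
  have "norm (c * ?g x) \<le> 1 * exp (-(t * x))" for x
    unfolding norm_cg using inv_hypot_le_1[of x] by (simp add: mult_left_le)
  then have cg_int: "(\<lambda>x. c * ?g x) integrable_on {0..}"
    by (intro integrable_on_Ici_exp_bound[OF cg_cont t])
  have Re_int: "(\<lambda>x. Re (c * ?g x)) integrable_on {0..}"
    using integrable_linear[OF cg_int bounded_linear_Re] by (simp add: o_def)
  have "cmod (E t) = Re (c * E t)"
    using c(2) by simp
  also have "c * E t = integral {0..} (\<lambda>x. c * ?g x)"
    unfolding E_eq_integral[OF t] by (rule integral_mult_right[symmetric])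
  also have "Re (integral {0..} (\<lambda>x. c * ?g x)) = integral {0..} (\<lambda>x. Re (c * ?g x))"
    using integral_linear[OF cg_int bounded_linear_Re] by (simp add: o_def)
  finally have E_eq: "cmod (E t) = integral {0..} (\<lambda>x. Re (c * ?g x))" .
  define k where "k x = cmod (c * ?g x) - Re (c * ?g x)" for x
  have k_nonneg: "0 \<le> k x" for x
    using complex_Re_le_cmod[of "c * ?g x"] by (simp add: k_def)
  have k_int: "k integrable_on {0..}"
    unfolding k_def norm_cg by (intro integrable_diff integrable_on_exp_inv_hypot t Re_int)
  have M_minus_E: "M t - cmod (E t) = integral {0..} k"
    unfolding M_eq_integral_inv_hypot E_eq k_def norm_cg
    by (rule integral_diff[OF integrable_on_exp_inv_hypot[OF t] Re_int, symmetric])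
  have k_cont: "continuous_on {0..} k"
    unfolding k_def using x_minus_i_neq_0 by (intro continuous_intros) auto
  have "c \<noteq> 0"
    using c(1) by auto
  then obtain x where x: "x \<in> {1, 2}" "Re (c * ?g x) < cmod (c * ?g x)"
    using Re_less_norm_mult_exp_div_x_minus_i[of c t] by blast
  then have "0 < integral {0..} k"
    by (intro integral_Ici_pos[OF k_cont k_int k_nonneg, of x]) (auto simp: k_def)
  then show ?thesis
    using M_minus_E by simp
qed

section \<open>Taylor bounds\<close>

lemma exp_minus_Maclaurin_remainder_sign:
  fixes x :: real
  assumes "0 \<le> x"
  shows "0 \<le> (-1) ^ n * (exp (- x) - (\<Sum>i<n. (- x) ^ i / fact i))"
proof -
  obtain \<tau> where "exp (- x) = (\<Sum>i<n. (- x) ^ i / fact i) + exp \<tau> / fact n * (- x) ^ n"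
    using Maclaurin_exp_le[of "- x" n] by blast
  moreover have "(-1) ^ n * (- x) ^ n = x ^ n"
    by (simp flip: power_mult_distrib)
  ultimately show ?thesis
    using assms by (simp add: algebra_simps)
qed

lemma exp_minus_ge_Maclaurin:
  fixes x :: real
  assumes "0 \<le> x"
  shows "(\<Sum>i<2 * k. (- x) ^ i / fact i) \<le> exp (- x)"
  using exp_minus_Maclaurin_remainder_sign[OF assms, of "2 * k"] by simp

lemma exp_minus_le_Maclaurin:
  fixes x :: real
  assumes "0 \<le> x"
  shows "exp (- x) \<le> (\<Sum>i<2 * k + 1. (- x) ^ i / fact i)"
  using exp_minus_Maclaurin_remainder_sign[OF assms, of "2 * k + 1"] by simp

lemma sin_Maclaurin_remainder_sign:
  fixes x :: real
  assumes "0 \<le> x" "x \<le> pi"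
  shows "0 \<le> (-1) ^ m * (sin x - (\<Sum>i<2 * m. sin_coeff i * x ^ i))"
proof (cases "x = 0")
  case True
  then show ?thesis
    by (simp add: sin_coeff_def)
next
  case False
  with assms obtain \<tau> where \<tau>: "0 < \<tau>" "\<tau> \<le> x"
    and sin_x: "sin x = (\<Sum>i<2 * m. sin_coeff i * x ^ i) + sin (\<tau> + 1/2 * real (2 * m) * pi) / fact (2 * m) * x ^ (2 * m)"
    using Maclaurin_sin_expansion4[of x "2 * m"] by auto
  have "sin (\<tau> + 1/2 * real (2 * m) * pi) = (-1) ^ m * sin \<tau>"
    by (simp add: sin_add)
  moreover have "0 \<le> sin \<tau>"
    using \<tau> assms by (intro sin_ge_zero) auto
  ultimately show ?thesis
    unfolding sin_x using assms
    by (auto simp: algebra_simps intro!: divide_nonneg_nonneg mult_nonneg_nonneg simp flip: power_mult_distrib)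
qed

lemma sin_ge_Maclaurin:
  fixes x :: real
  assumes "0 \<le> x" "x \<le> pi"
  shows "(\<Sum>i<4 * k. sin_coeff i * x ^ i) \<le> sin x"
  using sin_Maclaurin_remainder_sign[OF assms, of "2 * k"] by (simp add: mult.assoc)

lemma sin_le_Maclaurin:
  fixes x :: real
  assumes "0 \<le> x" "x \<le> pi"
  shows "sin x \<le> (\<Sum>i<4 * k + 2. sin_coeff i * x ^ i)"
  using sin_Maclaurin_remainder_sign[OF assms, of "2 * k + 1"] by (simp add: mult.assoc)

definition sinc_lower :: "real \<Rightarrow> real \<Rightarrow> real" where
  "sinc_lower a b = 1 - b\<^sup>2 / 6 + a ^ 4 / 120 - b ^ 6 / 5040"

definition sinc_upper :: "real \<Rightarrow> real \<Rightarrow> real" where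
  "sinc_upper a b = 1 - a\<^sup>2 / 6 + b ^ 4 / 120 - a ^ 6 / 5040 + b ^ 8 / 362880"

lemma sinc_lower_le:
  fixes a b x :: real
  assumes "0 \<le> a" "a \<le> x" "x \<le> b" "b \<le> pi"
  shows "sinc_lower a b \<le> sinc x"
proof -
  have "1 - x\<^sup>2 / 6 + x ^ 4 / 120 - x ^ 6 / 5040 \<le> sinc x"
  proof (cases "x = 0")
    case False
    have "x * (1 - x\<^sup>2 / 6 + x ^ 4 / 120 - x ^ 6 / 5040) = (\<Sum>i<4 * 2. sin_coeff i * x ^ i)"
      by (simp add: eval_nat_numeral sin_coeff_Suc cos_coeff_Suc algebra_simps)
    also have "\<dots> \<le> sin x"
      using assms by (intro sin_ge_Maclaurin) auto
    finally show ?thesis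
      using False assms by (simp add: le_divide_eq mult.commute)
  qed simp
  moreover have "x\<^sup>2 \<le> b\<^sup>2" "a ^ 4 \<le> x ^ 4" "x ^ 6 \<le> b ^ 6"
    using assms by (auto intro: power_mono)
  ultimately show ?thesis
    unfolding sinc_lower_def by linarith
qed

lemma sinc_le_sinc_upper:
  fixes a b x :: real
  assumes "0 \<le> a" "a \<le> x" "x \<le> b" "b \<le> pi"
  shows "sinc x \<le> sinc_upper a b"
proof -
  have "sinc x \<le> 1 - x\<^sup>2 / 6 + x ^ 4 / 120 - x ^ 6 / 5040 + x ^ 8 / 362880"
  proof (cases "x = 0")
    case False
    have "sin x \<le> (\<Sum>i<4 * 2 + 2. sin_coeff i * x ^ i)"
      using assms by (intro sin_le_Maclaurin) auto
    also have "\<dots> = x * (1 - x\<^sup>2 / 6 + x ^ 4 / 120 - x ^ 6 / 5040 + x ^ 8 / 362880)"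
      by (simp add: eval_nat_numeral sin_coeff_Suc cos_coeff_Suc algebra_simps)
    finally show ?thesis
      using False assms by (simp add: divide_le_eq mult.commute)
  qed simp
  moreover have "a\<^sup>2 \<le> x\<^sup>2" "x ^ 4 \<le> b ^ 4" "a ^ 6 \<le> x ^ 6" "x ^ 8 \<le> b ^ 8"
    using assms by (auto intro: power_mono)
  ultimately show ?thesis
    unfolding sinc_upper_def by linarith
qed

section \<open>A numerical upper bound for \<open>M (99 / 100)\<close>\<close>

lemma inv_hypot_le_iff:
  assumes "0 < r"
  shows "inv_hypot x \<le> r \<longleftrightarrow> 1 \<le> r\<^sup>2 * (x\<^sup>2 + 1)"
proof -
  have "inv_hypot x \<le> r \<longleftrightarrow> sqrt 1 \<le> r * sqrt (x\<^sup>2 + 1)"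
    by (simp add: inv_hypot_def divide_le_eq add_nonneg_pos mult.commute)
  also have "\<dots> \<longleftrightarrow> sqrt 1 \<le> sqrt (r\<^sup>2 * (x\<^sup>2 + 1))"
    using assms by (simp add: real_sqrt_mult)
  finally show ?thesis
    using real_sqrt_le_iff by blast
qed

lemma le_inv_hypot_iff:
  assumes "0 < r"
  shows "r \<le> inv_hypot x \<longleftrightarrow> r\<^sup>2 * (x\<^sup>2 + 1) \<le> 1"
proof -
  have "r \<le> inv_hypot x \<longleftrightarrow> r * sqrt (x\<^sup>2 + 1) \<le> sqrt 1"
    by (simp add: inv_hypot_def le_divide_eq add_nonneg_pos)
  also have "\<dots> \<longleftrightarrow> sqrt (r\<^sup>2 * (x\<^sup>2 + 1)) \<le> sqrt 1"
    using assms by (simp add: real_sqrt_mult)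
  finally show ?thesis
    using real_sqrt_le_iff by blast
qed

lemma inv_hypot_antimono:
  assumes "0 \<le> x" "x \<le> y"
  shows "inv_hypot y \<le> inv_hypot x"
  unfolding inv_hypot_def using assms
  by (intro divide_left_mono real_sqrt_le_mono add_right_mono power_mono) (auto simp: add_nonneg_pos)

lemma inv_hypot_le_inverse:
  assumes "0 < x"
  shows "inv_hypot x \<le> 1 / x"
  unfolding inv_hypot_def using assms
  by (intro divide_left_mono real_le_rsqrt) (auto simp: add_nonneg_pos zero_less_mult_iff)

lemma inverse_plus_1_le_inv_hypot:
  assumes "0 \<le> x"
  shows "1 / (x + 1) \<le> inv_hypot x"
proof -
  have "sqrt (x\<^sup>2 + 1) \<le> x + 1"
    using assms by (intro real_le_lsqrt) (auto simp: power2_eq_square algebra_simps)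
  then show ?thesis
    unfolding inv_hypot_def using assms
    by (intro divide_left_mono) (auto simp: add_nonneg_pos zero_less_mult_iff)
qed

lemma inv_hypot_le_quartic: "inv_hypot x \<le> 1 - x\<^sup>2 / 2 + 3 * x ^ 4 / 8"
proof -
  let ?Q = "8 - 4 * x\<^sup>2 + 3 * x ^ 4"
  have "?Q = 3 * (x\<^sup>2 - 2 / 3)\<^sup>2 + 20 / 3"
    by (simp add: power2_eq_square eval_nat_numeral algebra_simps)
  then have Q_pos: "0 < ?Q / 8"
    by (metis add_nonneg_pos mult_nonneg_nonneg zero_le_power2 zero_le_numeral zero_less_divide_iff
        zero_less_numeral)
  have Q_sq: "?Q\<^sup>2 * (x\<^sup>2 + 1) - 64 = x ^ 6 * (9 * x ^ 4 - 15 * x\<^sup>2 + 40)"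
    by (simp add: power2_eq_square eval_nat_numeral algebra_simps)
  have "4 * (9 * x ^ 4 - 15 * x\<^sup>2 + 40) = (6 * x\<^sup>2 - 5)\<^sup>2 + 135"
    by (simp add: power2_eq_square eval_nat_numeral algebra_simps)
  then have "0 \<le> 9 * x ^ 4 - 15 * x\<^sup>2 + 40"
    using zero_le_power2[of "6 * x\<^sup>2 - 5"] by (smt (verit))
  moreover have "0 \<le> x ^ 6"
    using zero_le_power2[of "x ^ 3"] by (simp flip: power_mult)
  ultimately have "0 \<le> x ^ 6 * (9 * x ^ 4 - 15 * x\<^sup>2 + 40)"
    by (rule mult_nonneg_nonneg[rotated])
  then have "64 \<le> ?Q\<^sup>2 * (x\<^sup>2 + 1)"
    using Q_sq by linarith
  then have "1 \<le> (?Q / 8)\<^sup>2 * (x\<^sup>2 + 1)"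
    by (simp add: power_divide)
  then have "inv_hypot x \<le> ?Q / 8"
    using inv_hypot_le_iff[OF Q_pos] by blast
  then show ?thesis
    by (simp add: add_divide_distrib diff_divide_distrib)
qed

lemma inv_hypot_has_real_derivative: "(inv_hypot has_real_derivative - x * inv_hypot x ^ 3) (at x)"
proof -
  have "0 < sqrt (x\<^sup>2 + 1)"
    by (simp add: add_nonneg_pos)
  then have "((\<lambda>x. 1 / sqrt (x\<^sup>2 + 1)) has_real_derivative - x * (1 / sqrt (x\<^sup>2 + 1)) ^ 3) (at x)"
    by (auto intro!: derivative_eq_intros simp: field_simps power2_eq_square power3_eq_cube)
  then show ?thesis
    unfolding inv_hypot_def[abs_def] .
qed

lemma convex_on_inv_hypot:
  fixes a :: real
  assumes "0 \<le> a" "1 \<le> 2 * a\<^sup>2"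
  shows "convex_on {a..} inv_hypot"
proof (rule f''_ge0_imp_convex)
  show "(inv_hypot has_real_derivative - x * inv_hypot x ^ 3) (at x)" for x
    by (rule inv_hypot_has_real_derivative)
  show "((\<lambda>x. - x * inv_hypot x ^ 3) has_real_derivative 3 * x\<^sup>2 * inv_hypot x ^ 5 - inv_hypot x ^ 3) (at x)" for x
    by (auto intro!: derivative_eq_intros inv_hypot_has_real_derivative simp: algebra_simps eval_nat_numeral)
  show "0 \<le> 3 * x\<^sup>2 * inv_hypot x ^ 5 - inv_hypot x ^ 3" if "x \<in> {a..}" for x
  proof -
    have "a\<^sup>2 \<le> x\<^sup>2"
      using that assms(1) by (intro power_mono) auto
    then have "1 \<le> 2 * x\<^sup>2"
      using assms(2) by linarith
    moreover have "inv_hypot x ^ 2 * (x\<^sup>2 + 1) = 1"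
      by (simp add: inv_hypot_def power_divide)
    then have "3 * x\<^sup>2 * inv_hypot x ^ 2 - 1 = inv_hypot x ^ 2 * (2 * x\<^sup>2 - 1)"
      by (simp add: algebra_simps; linarith)
    moreover have "0 \<le> inv_hypot x ^ 2 * (2 * x\<^sup>2 - 1)"
      using \<open>1 \<le> 2 * x\<^sup>2\<close> by simp
    ultimately have "1 \<le> 3 * x\<^sup>2 * inv_hypot x ^ 2"
      by linarith
    then have "inv_hypot x ^ 3 * 1 \<le> inv_hypot x ^ 3 * (3 * x\<^sup>2 * inv_hypot x ^ 2)"
      using inv_hypot_pos[of x] by (intro mult_left_mono) auto
    then show ?thesis
      by (simp add: eval_nat_numeral algebra_simps)
  qed
qed (simp add: convex_real_interval)

lemma integral_exp_inv_hypot_Icc_le: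
  fixes t a :: real
  assumes "0 < t" "0 \<le> a"
  defines "Q \<equiv> \<lambda>x. (1 - x\<^sup>2 / 2 + 3 * x ^ 4 / 8) / t + (3 * x ^ 3 / 2 - x) / t\<^sup>2
                 + (9 * x\<^sup>2 / 2 - 1) / t ^ 3 + 9 * x / t ^ 4 + 9 / t ^ 5"
  shows "integral {0..a} (\<lambda>x. exp (-(t * x)) * inv_hypot x) \<le> Q 0 - exp (-(t * a)) * Q a"
proof -
  have "integral {0..a} (\<lambda>x. exp (-(t * x)) * inv_hypot x)
        \<le> integral {0..a} (\<lambda>x. exp (-(t * x)) * (1 - x\<^sup>2 / 2 + 3 * x ^ 4 / 8))"
    by (intro integral_le integrable_continuous_interval continuous_intros continuous_on_inv_hypot
        mult_left_mono inv_hypot_le_quartic) auto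
  also have "\<dots> = - exp (-(t * a)) * Q a - - exp (-(t * 0)) * Q 0"
    using assms(2) unfolding Q_def
    by (intro integral_Icc_antiderivative)
       (use assms(1) in \<open>auto intro!: derivative_eq_intros simp flip: has_real_derivative_iff_has_vector_derivative
                           simp: field_simps eval_nat_numeral\<close>)
  finally show ?thesis
    by simp
qed

lemma mult_le_max_Icc:
  fixes A l u y :: real
  assumes "l \<le> y" "y \<le> u"
  shows "A * y \<le> max (A * l) (A * u)"
proof (cases "0 \<le> A")
  case True
  then have "A * y \<le> A * u"
    using assms by (intro mult_left_mono)
  then show ?thesis
    by simp
next
  case False
  then have "A * y \<le> A * l"
    using assms by (intro mult_left_mono_neg) auto
  then show ?thesis
    by simp
qed

lemma min_le_mult_Icc:
  fixes A l u y :: real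
  assumes "l \<le> y" "y \<le> u"
  shows "min (A * l) (A * u) \<le> A * y"
  using mult_le_max_Icc[OF assms, of "- A"] by (simp add: max_def min_def split: if_splits)

lemma integral_exp_convex_le_chord:
  fixes f :: "real \<Rightarrow> real"
  assumes f: "convex_on {a..b} f" "continuous_on {a..b} f" and ab: "a < b" and t: "0 < t"
    and r: "f a \<le> ra" "f b \<le> rb"
  defines "s \<equiv> (rb - ra) / (b - a)"
  shows "integral {a..b} (\<lambda>x. exp (-(t * x)) * f x)
         \<le> exp (-(t * a)) * (ra / t + s / t\<^sup>2) - exp (-(t * b)) * (rb / t + s / t\<^sup>2)"
proof -
  have chord: "f x \<le> ra + s * (x - a)" if x: "x \<in> {a..b}" for x
  proof -
    define u where "u = (x - a) / (b - a)"
    have u: "0 \<le> u" "u \<le> 1"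
      using x ab by (auto simp: u_def divide_simps)
    have "u * (b - a) = x - a"
      using ab by (simp add: u_def)
    then have "x = (1 - u) *\<^sub>R a + u *\<^sub>R b"
      by (simp add: algebra_simps)
    then have "f x \<le> (1 - u) * f a + u * f b"
      using convex_onD[OF f(1) u, of a b] ab by simp
    also have "\<dots> \<le> (1 - u) * ra + u * rb"
      using u r by (intro add_mono mult_left_mono) auto
    also have "\<dots> = ra + u * (rb - ra)"
      by (simp add: algebra_simps)
    also have "u * (rb - ra) = s * (x - a)"
      by (simp add: u_def s_def)
    finally show ?thesis .
  qed
  have "integral {a..b} (\<lambda>x. exp (-(t * x)) * f x) \<le> integral {a..b} (\<lambda>x. exp (-(t * x)) * (ra + s * (x - a)))"
    using chord f(2) by (intro integral_le integrable_continuous_interval continuous_intros mult_left_mono) auto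
  also have "\<dots> = - exp (-(t * b)) * ((ra + s * (b - a)) / t + s / t\<^sup>2) - - exp (-(t * a)) * ((ra + s * (a - a)) / t + s / t\<^sup>2)"
    using ab t
    by (intro integral_Icc_antiderivative)
       (auto intro!: derivative_eq_intros simp flip: has_real_derivative_iff_has_vector_derivative
             simp: field_simps power2_eq_square)
  also have "ra + s * (b - a) = rb"
    using ab by (simp add: s_def)
  finally show ?thesis
    by simp
qed

lemma exp_grid_bounds:
  fixes t h ql qu :: real
  assumes "0 \<le> ql" "ql \<le> exp (-(t * h))" "exp (-(t * h)) \<le> qu"
  shows "ql ^ k \<le> exp (-(t * (h * k)))" "exp (-(t * (h * k))) \<le> qu ^ k"
proof -
  have "exp (-(t * (h * k))) = exp (-(t * h)) ^ k"
    using exp_of_nat_mult[of k "-(t * h)"] by (simp add: algebra_simps)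
  then show "ql ^ k \<le> exp (-(t * (h * k)))" "exp (-(t * (h * k))) \<le> qu ^ k"
    using assms by (auto intro: power_mono)
qed

text \<open>The chord bound of \<open>integral_exp_convex_le_chord\<close> on \<open>[h * i, h * j]\<close>, with \<open>exp (-(t * (h * k)))\<close>
  enclosed in \<open>[ql ^ k, qu ^ k]\<close>.\<close>

definition grid_chord_piece :: "real \<Rightarrow> real \<Rightarrow> real \<Rightarrow> real \<Rightarrow> nat \<times> real \<Rightarrow> nat \<times> real \<Rightarrow> real" where
  "grid_chord_piece t h ql qu = (\<lambda>(i, ri) (j, rj).
     let s = (rj - ri) / (h * (real j - real i))
     in max ((ri / t + s / t\<^sup>2) * ql ^ i) ((ri / t + s / t\<^sup>2) * qu ^ i)
        - min ((rj / t + s / t\<^sup>2) * ql ^ j) ((rj / t + s / t\<^sup>2) * qu ^ j))"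

fun grid_chord_bound :: "real \<Rightarrow> real \<Rightarrow> real \<Rightarrow> real \<Rightarrow> (nat \<times> real) list \<Rightarrow> real" where
  "grid_chord_bound t h ql qu (n # n' # ns) = grid_chord_piece t h ql qu n n' + grid_chord_bound t h ql qu (n' # ns)"
| "grid_chord_bound t h ql qu ns = 0"

lemma integral_exp_convex_le_grid_chord_piece:
  fixes f :: "real \<Rightarrow> real"
  assumes f: "convex_on {h * i..h * j} f" "continuous_on {h * i..h * j} f" "f (h * i) \<le> ri" "f (h * j) \<le> rj"
    and ij: "h * i < h * j" and t: "0 < t" and q: "0 \<le> ql" "ql \<le> exp (-(t * h))" "exp (-(t * h)) \<le> qu"
  shows "integral {h * i..h * j} (\<lambda>x. exp (-(t * x)) * f x) \<le> grid_chord_piece t h ql qu (i, ri) (j, rj)"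
proof -
  define s where "s = (rj - ri) / (h * (real j - real i))"
  have "integral {h * i..h * j} (\<lambda>x. exp (-(t * x)) * f x)
        \<le> exp (-(t * (h * i))) * (ri / t + s / t\<^sup>2) - exp (-(t * (h * j))) * (rj / t + s / t\<^sup>2)"
    using integral_exp_convex_le_chord[OF f(1,2) ij t f(3,4)] by (simp add: s_def right_diff_distrib)
  also have "\<dots> \<le> max ((ri / t + s / t\<^sup>2) * ql ^ i) ((ri / t + s / t\<^sup>2) * qu ^ i)
                  - min ((rj / t + s / t\<^sup>2) * ql ^ j) ((rj / t + s / t\<^sup>2) * qu ^ j)"
    using mult_le_max_Icc[OF exp_grid_bounds[OF q, of i], of "ri / t + s / t\<^sup>2"]
      min_le_mult_Icc[OF exp_grid_bounds[OF q, of j], of "rj / t + s / t\<^sup>2"]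
    by (simp add: mult.commute)
  finally show ?thesis
    by (simp add: grid_chord_piece_def s_def)
qed

lemma integral_exp_convex_le_grid_chord_bound:
  fixes f :: "real \<Rightarrow> real"
  assumes f: "convex_on {c..} f" "continuous_on {c..} f"
    and t: "0 < t" and h: "0 < h" and q: "0 \<le> ql" "ql \<le> exp (-(t * h))" "exp (-(t * h)) \<le> qu"
  shows "sorted_wrt (<) (map fst ns) \<Longrightarrow> \<forall>(k, r) \<in> set ns. c \<le> h * real k \<and> f (h * real k) \<le> r \<Longrightarrow>
         ns \<noteq> [] \<Longrightarrow> integral {h * real (fst (hd ns))..h * real (fst (last ns))} (\<lambda>x. exp (-(t * x)) * f x)
           \<le> grid_chord_bound t h ql qu ns"
proof (induction ns rule: induct_list012)
  case (2 n)
  then show ?case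
    by (cases n) simp
next
  case (3 n n' ns)
  obtain i ri j rj where n: "n = (i, ri)" "n' = (j, rj)"
    by fastforce
  let ?L = "fst (last (n' # ns))"
  have ij: "h * i < h * j"
    using "3.prems"(1) n h by simp
  have "j \<le> ?L"
    using "3.prems"(1) n last_in_set[of "n' # ns"] by (cases ns) (auto simp: less_imp_le)
  then have jL: "h * j \<le> h * ?L"
    using h by simp
  have nodes: "c \<le> h * i" "f (h * i) \<le> ri" "f (h * j) \<le> rj"
    using "3.prems"(2) n by auto
  have cont: "continuous_on {h * i..h * ?L} f"
    using nodes by (intro continuous_on_subset[OF f(2)]) auto
  have "(\<lambda>x. exp (-(t * x)) * f x) integrable_on {h * i..h * ?L}"
    by (intro integrable_continuous_interval continuous_intros cont)
  then have "integral {h * i..h * j} (\<lambda>x. exp (-(t * x)) * f x) + integral {h * j..h * ?L} (\<lambda>x. exp (-(t * x)) * f x)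
      = integral {h * i..h * ?L} (\<lambda>x. exp (-(t * x)) * f x)"
    using ij jL by (intro Henstock_Kurzweil_Integration.integral_combine) auto
  moreover have "integral {h * j..h * ?L} (\<lambda>x. exp (-(t * x)) * f x) \<le> grid_chord_bound t h ql qu (n' # ns)"
    using "3.IH"(2) "3.prems" n by simp
  moreover have "integral {h * i..h * j} (\<lambda>x. exp (-(t * x)) * f x) \<le> grid_chord_piece t h ql qu n n'"
    unfolding n using nodes ij jL t q
    by (intro integral_exp_convex_le_grid_chord_piece convex_on_subset[OF f(1)] continuous_on_subset[OF cont])
       auto
  ultimately show ?case
    using n by simp
qed simp

lemma integral_exp_inv_hypot_Ici_le:
  fixes t a :: real
  assumes t: "0 < t" and a: "0 < a"
  shows "integral {a..} (\<lambda>x. exp (-(t * x)) * inv_hypot x) \<le> exp (-(t * a)) / (t * a)"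
proof -
  have int: "((\<lambda>x. exp (-(t * x)) / a) has_integral exp (-(t * a)) / t / a) {a..}"
    by (intro has_integral_divide has_integral_exp_Ici t)
  have "integral {a..} (\<lambda>x. exp (-(t * x)) * inv_hypot x) \<le> integral {a..} (\<lambda>x. exp (-(t * x)) / a)"
  proof (intro integral_le integrable_on_exp_inv_hypot t)
    show "(\<lambda>x. exp (-(t * x)) / a) integrable_on {a..}"
      using int by blast
    fix x assume "x \<in> {a..}"
    then have "inv_hypot x \<le> 1 / a"
      using a inv_hypot_le_inverse[of x] frac_le[of 1 1 a x] by auto
    then show "exp (-(t * x)) * inv_hypot x \<le> exp (-(t * x)) / a"
      using mult_left_mono[of _ _ "exp (-(t * x))"] by fastforce
  qed
  then show ?thesis
    using integral_unique[OF int] by simp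
qed

lemma M_99_100_le: "M (99 / 100) \<le> 383 / 500"
proof -
  define t :: real where "t = 99 / 100"
  let ?m = "\<lambda>x. exp (-(t * x)) * inv_hypot x"
  have m_int: "?m integrable_on {a..}" for a
    by (rule integrable_on_exp_inv_hypot) (simp add: t_def)
  have m_cont: "continuous_on A ?m" for A
    by (intro continuous_intros continuous_on_inv_hypot)
  have ql: "237961 / 500000 \<le> exp (-(t * (3 / 4)))"
    using exp_minus_ge_Maclaurin[of "t * (3 / 4)" 5] by (simp add: t_def eval_nat_numeral)
  have qu: "exp (-(t * (3 / 4))) \<le> 475923 / 1000000"
    using exp_minus_le_Maclaurin[of "t * (3 / 4)" 4] by (simp add: t_def eval_nat_numeral)
  have "M t = integral {0..3 / 4} ?m + integral {3 / 4..9} ?m + integral {9..} ?m"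
    unfolding M_eq_integral_inv_hypot
    using integral_Ici_split[of ?m 0 "3 / 4"] integral_Ici_split[of ?m "3 / 4" 9]
      m_int integrable_continuous_interval[OF m_cont] by simp
  moreover have "integral {0..3 / 4} ?m \<le> 4984 / 10000"
    using integral_exp_inv_hypot_Icc_le[of t "3 / 4"] ql by (simp add: t_def power_divide)
  moreover have "integral {3 / 4..9} ?m \<le> 2674 / 10000"
  proof -
    have convex: "convex_on {3 / 4..} inv_hypot"
      by (rule convex_on_inv_hypot) (simp_all add: power_divide)
    let ?ns = "[(1, 4 / 5), (2, 55471 / 100000), (3, 20307 / 50000), (4, 31623 / 100000),
                (6, 10847 / 50000), (8, 411 / 2500), (12, 2761 / 25000)]"
    have "\<forall>(k, r) \<in> set ?ns. 3 / 4 \<le> 3 / 4 * real k \<and> inv_hypot (3 / 4 * real k) \<le> r"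
      by (simp add: inv_hypot_le_iff power_divide del: le_divide_eq_numeral1)
    then have "integral {3 / 4..9} ?m \<le> grid_chord_bound t (3 / 4) (237961 / 500000) (475923 / 1000000) ?ns"
      using integral_exp_convex_le_grid_chord_bound[OF convex continuous_on_inv_hypot _ _ _ ql qu, of ?ns]
      by (simp add: t_def)
    also have "\<dots> \<le> 2674 / 10000"
      by (simp add: t_def grid_chord_piece_def power_divide)
    finally show ?thesis .
  qed
  moreover have "integral {9..} ?m \<le> 1 / 10000"
  proof -
    have "exp (-(t * 9)) \<le> (475923 / 1000000) ^ 12"
      using exp_grid_bounds(2)[OF _ ql qu, of 12] by simp
    then show ?thesis
      using integral_exp_inv_hypot_Ici_le[of t 9] by (simp add: t_def power_divide)
  qed
  ultimately show ?thesis
    by (simp add: t_def)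
qed

section \<open>The sign of \<open>sinc x - inv_hypot x\<close>\<close>

lemma Icc_covered_by_consecutive:
  fixes a x :: real
  assumes "sorted (a # xs)" "xs \<noteq> []" "\<forall>(u, v) \<in> set (zip (a # xs) xs). C u v"
    and "\<And>u v y. C u v \<Longrightarrow> u \<le> y \<Longrightarrow> y \<le> v \<Longrightarrow> P y"
    and "a \<le> x" "x \<le> last xs"
  shows "P x"
  using assms
proof (induction xs arbitrary: a)
  case (Cons b ys)
  show ?case
  proof (cases "x \<le> b")
    case True
    then show ?thesis
      using Cons.prems by auto
  next
    case False
    then have "ys \<noteq> []"
      using Cons.prems(6) by auto
    then show ?thesis
      using Cons.IH[of b] Cons.prems False by auto
  qed
qed simp

lemma inv_hypot_le_sinc_Icc:
  fixes a b x :: real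
  assumes "0 \<le> a \<and> b \<le> pi \<and> 0 < sinc_lower a b \<and> 1 \<le> (sinc_lower a b)\<^sup>2 * (a\<^sup>2 + 1)"
    and "a \<le> x" "x \<le> b"
  shows "inv_hypot x \<le> sinc x"
proof -
  have "inv_hypot x \<le> inv_hypot a"
    using assms by (intro inv_hypot_antimono) auto
  also have "\<dots> \<le> sinc_lower a b"
    using assms(1) inv_hypot_le_iff by blast
  also have "\<dots> \<le> sinc x"
    using assms by (intro sinc_lower_le) auto
  finally show ?thesis .
qed

lemma sinc_le_inv_hypot_plus_Icc:
  fixes a b x B :: real
  assumes "0 \<le> a \<and> b \<le> pi \<and> (sinc_upper a b \<le> B \<or> (sinc_upper a b - B)\<^sup>2 * (b\<^sup>2 + 1) \<le> 1)"
    and "a \<le> x" "x \<le> b"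
  shows "sinc x \<le> B + inv_hypot x"
proof -
  have "sinc_upper a b - B \<le> inv_hypot b"
    using assms(1) inv_hypot_pos[of b] le_inv_hypot_iff[of "sinc_upper a b - B" b]
    by (cases "sinc_upper a b \<le> B") auto
  also have "\<dots> \<le> inv_hypot x"
    using assms by (intro inv_hypot_antimono) auto
  finally show ?thesis
    using sinc_le_sinc_upper[of a x b] assms by auto
qed

lemma inv_hypot_le_sinc:
  fixes x :: real
  assumes "0 \<le> x" "x \<le> 9 / 5"
  shows "inv_hypot x \<le> sinc x"
proof (cases "x \<le> 9 / 10")
  case True
  have "x\<^sup>2 \<le> (9 / 10)\<^sup>2"
    using assms True by (intro power_mono) auto
  then have x2: "x\<^sup>2 \<le> 81 / 100"
    by (simp add: power_divide)
  have x4: "x ^ 4 \<le> 81 / 100 * x\<^sup>2"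
    using mult_right_mono[OF x2 zero_le_power2[of x]] by (simp add: power2_eq_square eval_nat_numeral)
  have "x\<^sup>2 * x ^ 4 \<le> 81 / 100 * x ^ 4"
    using x2 by (intro mult_right_mono) simp_all
  then have x6: "x ^ 6 \<le> 81 / 100 * x ^ 4"
    by (simp flip: power_add)
  have "1 - x\<^sup>2 / 2 + 3 * x ^ 4 / 8 \<le> 1 - x\<^sup>2 / 6 + x ^ 4 / 120 - x ^ 6 / 5040"
    using x4 x6 zero_le_power2[of x] by linarith
  also have "\<dots> \<le> sinc x"
    using sinc_lower_le[of x x x] assms pi_gt3 by (simp add: sinc_lower_def)
  finally show ?thesis
    using inv_hypot_le_quartic[of x] by linarith
next
  case False
  then show ?thesis
    using assms pi_gt3
    by (intro Icc_covered_by_consecutive[of "9 / 10" "[5 / 4, 3 / 2, 17 / 10, 9 / 5]",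
          OF _ _ _ inv_hypot_le_sinc_Icc]) (auto simp: sinc_lower_def power_divide)
qed

lemma sinc_minus_inv_hypot_le:
  fixes x :: real
  assumes "9 / 5 \<le> x"
  shows "sinc x - inv_hypot x \<le> 1 / 11"
proof (cases "x \<le> 3")
  case True
  then have "sinc x \<le> 1 / 11 + inv_hypot x"
    using assms pi_gt3
    by (intro Icc_covered_by_consecutive[of "9 / 5" "[37 / 20, 39 / 20, 21 / 10, 23 / 10, 51 / 20, 14 / 5, 3]",
          OF _ _ _ sinc_le_inv_hypot_plus_Icc]) (auto simp: sinc_upper_def power_divide)
  then show ?thesis
    by simp
next
  case False
  then have "sinc x \<le> 1 / x"
    using abs_sin_le_one[of x] by (simp add: divide_right_mono abs_le_iff)
  moreover have "1 / (x + 1) \<le> inv_hypot x"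
    using False by (intro inverse_plus_1_le_inv_hypot) auto
  moreover have "1 / x - 1 / (x + 1) = 1 / (x * (x + 1))"
    using False by (simp add: field_simps)
  moreover have "1 / (x * (x + 1)) \<le> 1 / (3 * 4)"
    using False by (intro divide_left_mono mult_mono) auto
  ultimately show ?thesis
    by simp
qed

section \<open>Comparison with \<open>arccot\<close>\<close>

lemma integral_Icc_exp_shift_lower_bound:
  fixes h :: "real \<Rightarrow> real"
  assumes h: "continuous_on {0..c} h" "\<And>x. 0 \<le> x \<Longrightarrow> x \<le> c \<Longrightarrow> 0 \<le> h x" and t: "t0 \<le> t"
  shows "exp (-((t - t0) * c)) * integral {0..c} (\<lambda>x. exp (-(t0 * x)) * h x)
         \<le> integral {0..c} (\<lambda>x. exp (-(t * x)) * h x)"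
proof -
  have "integral {0..c} (\<lambda>x. exp (-((t - t0) * c)) * (exp (-(t0 * x)) * h x))
        \<le> integral {0..c} (\<lambda>x. exp (-(t * x)) * h x)"
  proof (rule integral_le)
    fix x assume x: "x \<in> {0..c}"
    have "exp (-((t - t0) * c)) \<le> exp (-((t - t0) * x))"
      using x t by (simp add: mult_left_mono)
    then have "exp (-((t - t0) * c)) * (exp (-(t0 * x)) * h x) \<le> exp (-((t - t0) * x)) * (exp (-(t0 * x)) * h x)"
      using x h(2)[of x] by (intro mult_right_mono) auto
    then show "exp (-((t - t0) * c)) * (exp (-(t0 * x)) * h x) \<le> exp (-(t * x)) * h x"
      by (simp add: algebra_simps flip: exp_add)
  qed (use h(1) in \<open>auto intro!: integrable_continuous_interval continuous_intros\<close>)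
  then show ?thesis
    by simp
qed

lemma integral_Ici_exp_shift_lower_bound:
  fixes h :: "real \<Rightarrow> real"
  assumes int: "(\<lambda>x. exp (-(t0 * x)) * h x) integrable_on {c..}" "(\<lambda>x. exp (-(t * x)) * h x) integrable_on {c..}"
    and h: "\<And>x. c \<le> x \<Longrightarrow> h x \<le> B" and B: "0 \<le> B" and t: "0 < t0" "t0 \<le> t"
  shows "exp (-((t - t0) * c)) * (integral {c..} (\<lambda>x. exp (-(t0 * x)) * h x) - B * exp (-(t0 * c)) / t0)
         \<le> integral {c..} (\<lambda>x. exp (-(t * x)) * h x)"
proof -
  define w where "w = exp (-((t - t0) * c))"
  have B_int: "((\<lambda>x. B * exp (-(t0 * x))) has_integral B * exp (-(t0 * c)) / t0) {c..}"
    using has_integral_mult_right[OF has_integral_exp_Ici[OF t(1)], of B] by simp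
  have "integral {c..} (\<lambda>x. w * (exp (-(t0 * x)) * h x - B * exp (-(t0 * x))))
        \<le> integral {c..} (\<lambda>x. exp (-(t * x)) * h x)"
  proof (rule integral_le)
    fix x assume x: "x \<in> {c..}"
    have "w * (h x - B) \<le> exp (-((t - t0) * x)) * h x"
    proof (cases "0 \<le> h x")
      case True
      have "w * (h x - B) \<le> 0"
        using h[of x] x by (simp add: w_def mult_nonneg_nonpos)
      also have "0 \<le> exp (-((t - t0) * x)) * h x"
        using True by simp
      finally show ?thesis .
    next
      case False
      have "w * (h x - B) \<le> w * h x"
        using B by (simp add: w_def algebra_simps)
      also have "\<dots> \<le> exp (-((t - t0) * x)) * h x"
        using x t False by (intro mult_right_mono_neg) (auto simp: w_def mult_left_mono)
      finally show ?thesis .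
    qed
    then have "exp (-(t0 * x)) * (w * (h x - B)) \<le> exp (-(t0 * x)) * (exp (-((t - t0) * x)) * h x)"
      by (intro mult_left_mono) auto
    then show "w * (exp (-(t0 * x)) * h x - B * exp (-(t0 * x))) \<le> exp (-(t * x)) * h x"
      by (simp add: algebra_simps flip: exp_add)
  qed (intro integrable_on_mult_right integrable_diff int has_integral_integrable[OF B_int])+
  also have "integral {c..} (\<lambda>x. w * (exp (-(t0 * x)) * h x - B * exp (-(t0 * x))))
             = w * (integral {c..} (\<lambda>x. exp (-(t0 * x)) * h x) - B * exp (-(t0 * c)) / t0)"
    using int B_int integral_unique[OF B_int] by (simp add: integral_diff has_integral_integrable)
  finally show ?thesis
    unfolding w_def .
qed

lemma integral_exp_shift_lower_bound:
  fixes h :: "real \<Rightarrow> real"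
  assumes h: "continuous_on {0..} h" "\<And>x. 0 \<le> x \<Longrightarrow> \<bar>h x\<bar> \<le> K"
    and h_nonneg: "\<And>x. 0 \<le> x \<Longrightarrow> x \<le> c \<Longrightarrow> 0 \<le> h x" and h_le: "\<And>x. c \<le> x \<Longrightarrow> h x \<le> B"
    and B: "0 \<le> B" and c: "0 \<le> c" and t: "0 < t0" "t0 \<le> t"
  shows "exp (-((t - t0) * c)) * (integral {0..} (\<lambda>x. exp (-(t0 * x)) * h x) - B * exp (-(t0 * c)) / t0)
         \<le> integral {0..} (\<lambda>x. exp (-(t * x)) * h x)"
proof -
  let ?g = "\<lambda>s x. exp (-(s * x)) * h x"
  have cont: "continuous_on {a..} (?g s)" if "0 \<le> a" for a s
    using that by (intro continuous_intros continuous_on_subset[OF h(1)]) auto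
  have int: "?g s integrable_on {a..}" if "0 < s" "0 \<le> a" for s a
    using that h(2) by (intro integrable_on_Ici_exp_bound[OF cont that(1), where C = K])
                       (auto simp: abs_mult mult.commute intro: mult_right_mono)
  have split: "integral {0..} (?g s) = integral {0..c} (?g s) + integral {c..} (?g s)" if "0 < s" for s
    using that c
    by (intro integral_Ici_split int integrable_continuous_interval continuous_on_subset[OF cont[of 0]]) auto
  have "exp (-((t - t0) * c)) * integral {0..c} (?g t0)
        + exp (-((t - t0) * c)) * (integral {c..} (?g t0) - B * exp (-(t0 * c)) / t0)
        \<le> integral {0..c} (?g t) + integral {c..} (?g t)"
    using h_nonneg h_le B t c int
    by (intro add_mono integral_Icc_exp_shift_lower_bound integral_Ici_exp_shift_lower_bound
        continuous_on_subset[OF h(1)]) auto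
  then show ?thesis
    unfolding split[OF t(1)] split[OF order.strict_trans2[OF t]] by (simp add: algebra_simps)
qed

lemma arccot_minus_M_eq_integral:
  fixes t :: real
  assumes "0 < t"
  shows "arccot t - M t = integral {0..} (\<lambda>x. exp (-(t * x)) * (sinc x - inv_hypot x))"
proof -
  have "arccot t - M t = integral {0..} (\<lambda>x. exp (-(t * x)) * sinc x) - integral {0..} (\<lambda>x. exp (-(t * x)) * inv_hypot x)"
    using has_integral_exp_sinc[OF assms] by (simp add: integral_unique M_eq_integral_inv_hypot)
  also have "\<dots> = integral {0..} (\<lambda>x. exp (-(t * x)) * (sinc x - inv_hypot x))"
    using has_integral_exp_sinc[OF assms] integrable_on_exp_inv_hypot[OF assms]
    by (subst integral_diff[symmetric]) (auto simp: algebra_simps)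
  finally show ?thesis .
qed

lemma arccot_gt_pi_4: "t < 1 \<Longrightarrow> pi / 4 < arccot t"
  unfolding arccot_def using arctan_less_iff[of t 1] by (simp add: arctan_one)

lemma arccot_antimono: "s \<le> t \<Longrightarrow> arccot t \<le> arccot s"
  unfolding arccot_def by (simp add: arctan_le_iff)

theorem M_less_arccot:
  fixes t :: real
  assumes t: "199 / 200 < t"
  shows "M t < arccot t"
proof -
  define t0 :: real where "t0 = 199 / 200"
  have t0_pos: "0 < t0" and t_pos: "0 < t"
    using t by (simp_all add: t0_def)
  have "exp (-(t0 * (9 / 5))) \<le> 1673 / 10000"
    using exp_minus_le_Maclaurin[of "t0 * (9 / 5)" 4] by (simp add: t0_def eval_nat_numeral)
  moreover have "M t0 \<le> 383 / 500"
    using M_antimono[of "99 / 100" t0] M_99_100_le by (simp add: t0_def)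
  moreover have "pi / 4 < arccot t0"
    unfolding t0_def by (rule arccot_gt_pi_4) simp
  ultimately have "0 < arccot t0 - M t0 - 1 / 11 * exp (-(t0 * (9 / 5))) / t0"
    using pi_approx by (simp add: t0_def)
  then have "0 < exp (-((t - t0) * (9 / 5))) * (arccot t0 - M t0 - 1 / 11 * exp (-(t0 * (9 / 5))) / t0)"
    by simp
  also have "\<dots> \<le> arccot t - M t"
    unfolding arccot_minus_M_eq_integral[of t0, OF t0_pos] arccot_minus_M_eq_integral[of t, OF t_pos]
  proof (rule integral_exp_shift_lower_bound[where K = 2])
    show "continuous_on {0..} (\<lambda>x. sinc x - inv_hypot x)"
      by (intro continuous_intros continuous_on_inv_hypot)
    show "\<bar>sinc x - inv_hypot x\<bar> \<le> 2" for x
      using abs_sinc_le_1[of x] inv_hypot_pos[of x] inv_hypot_le_1[of x] by linarith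
  qed (use t inv_hypot_le_sinc sinc_minus_inv_hypot_le in \<open>auto simp: t0_def\<close>)
  finally show ?thesis
    by simp
qed

theorem norm_E_less_arccot:
  fixes t :: real
  assumes t: "99 / 100 < t"
  shows "cmod (E t) < arccot t"
proof (cases "199 / 200 < t")
  case True
  then show ?thesis
    using norm_E_less_M[of t] M_less_arccot[OF True] by simp
next
  case False
  have "cmod (E t) < M t"
    using t by (intro norm_E_less_M) simp
  also have "\<dots> \<le> M (99 / 100)"
    using t by (intro M_antimono) auto
  also have "\<dots> < pi / 4"
    using M_99_100_le pi_approx by simp
  also have "\<dots> < arccot (199 / 200)"
    by (rule arccot_gt_pi_4) simp
  also have "\<dots> \<le> arccot t"
    using False by (intro arccot_antimono) simp
  finally show ?thesis .
qed

section \<open>The sine integral\<close>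

lemma Si_0: "Si 0 = 0"
  unfolding Si_def by (simp add: zero_ereal_def)

lemma integral_sin_div_eq_Si_diff:
  fixes a b :: real
  assumes "a \<le> b"
  shows "integral {a..b} (\<lambda>u. sin u / u) = Si b - Si a"
proof -
  have "integral {a..b} (\<lambda>u. sin u / u) = integral {a..b} sinc"
    by (rule integral_spike[of "{0}"]) auto
  also have "\<dots> = Si b - Si a"
    using assms DERIV_Si[THEN has_field_derivative_at_within]
    by (intro integral_Icc_antiderivative) (simp_all only: has_real_derivative_iff_has_vector_derivative)
  finally show ?thesis .
qed

lemma si_eq_Si: "si t = Si t - pi / 2"
proof -
  have "((\<lambda>R. Si R - Si t) \<longlongrightarrow> pi / 2 - Si t) at_top"
    by (intro tendsto_intros Si_at_top)
  moreover have "\<forall>\<^sub>F R in at_top. Si R - Si t = integral {t..R} (\<lambda>u. sin u / u)"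
    using eventually_ge_at_top[of t] by eventually_elim (simp add: integral_sin_div_eq_Si_diff)
  ultimately have "((\<lambda>R. integral {t..R} (\<lambda>u. sin u / u)) \<longlongrightarrow> pi / 2 - Si t) at_top"
    by (rule Lim_transform_eventually)
  then show ?thesis
    unfolding si_def by (simp add: tendsto_Lim[OF trivial_limit_at_top_linorder])
qed

lemma Im_rotated_E_partial_integral:
  fixes t R :: real
  assumes t: "0 < t" and R: "0 \<le> R"
  shows "Im (exp (\<i> * of_real t) * integral {0..R} (\<lambda>u. exp (\<i> * of_real u) / of_real (u + t)))
         = Si (R + t) - Si t"
proof -
  let ?f = "\<lambda>u. exp (\<i> * of_real t) * (exp (\<i> * of_real u) / of_real (u + t))"
  have f_int: "?f integrable_on {0..R}"
    using t by (intro integrable_continuous_interval continuous_intros) (auto simp: complex_eq_iff)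
  have Im_f: "Im (?f u) = sin (u + t) / (u + t)" if "u \<in> {0..R}" for u
  proof -
    have "?f u = cis (u + t) / of_real (u + t)"
      by (simp add: cis_conv_exp algebra_simps flip: exp_add)
    then show ?thesis
      by (simp only: Im_divide_of_real cis.sel)
  qed
  have "Im (exp (\<i> * of_real t) * integral {0..R} (\<lambda>u. exp (\<i> * of_real u) / of_real (u + t)))
      = Im (integral {0..R} ?f)"
    by (simp only: integral_mult_right)
  also have "\<dots> = integral {0..R} (\<lambda>u. Im (?f u))"
    using integral_linear[OF f_int bounded_linear_Im] by (simp add: o_def)
  also have "\<dots> = integral {0..R} (\<lambda>u. sin (u + t) / (u + t))"
    using Im_f by (intro integral_cong) auto
  also have "\<dots> = Si (R + t) - Si (0 + t)"
  proof (rule integral_Icc_antiderivative[OF R])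
    fix u assume u: "u \<in> {0..R}"
    have "((\<lambda>u. Si (u + t)) has_real_derivative sinc (u + t) * 1) (at u within {0..R})"
      by (rule DERIV_chain2[OF DERIV_Si]) (auto intro!: derivative_eq_intros)
    then show "((\<lambda>u. Si (u + t)) has_vector_derivative sin (u + t) / (u + t)) (at u within {0..R})"
      using u t by (simp add: has_real_derivative_iff_has_vector_derivative)
  qed
  finally show ?thesis
    by simp
qed

lemma abs_si_le_norm_E:
  fixes t :: real
  assumes t: "0 < t"
  shows "\<bar>si t\<bar> \<le> cmod (E t)"
proof -
  let ?I = "\<lambda>R. integral {0..R} (\<lambda>u. exp (\<i> * of_real u) / of_real (u + t))"
  have "((\<lambda>R. Im (exp (\<i> * of_real t) * ?I R)) \<longlongrightarrow> Im (exp (\<i> * of_real t) * E t)) at_top"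
    by (intro tendsto_intros tendsto_E_partial_integral[OF t])
  moreover have "((\<lambda>R. Im (exp (\<i> * of_real t) * ?I R)) \<longlongrightarrow> pi / 2 - Si t) at_top"
  proof (rule Lim_transform_eventually)
    show "((\<lambda>R. Si (R + t) - Si t) \<longlongrightarrow> pi / 2 - Si t) at_top"
      by (intro tendsto_intros filterlim_compose[OF Si_at_top]) real_asymp
    show "\<forall>\<^sub>F R in at_top. Si (R + t) - Si t = Im (exp (\<i> * of_real t) * ?I R)"
      using eventually_ge_at_top[of 0]
      by eventually_elim (rule Im_rotated_E_partial_integral[OF t, symmetric])
  qed
  ultimately have "Im (exp (\<i> * of_real t) * E t) = - si t"
    using tendsto_unique[OF trivial_limit_at_top_linorder] by (fastforce simp: si_eq_Si)
  then have "\<bar>si t\<bar> = \<bar>Im (exp (\<i> * of_real t) * E t)\<bar>"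
    by simp
  also have "\<dots> \<le> cmod (exp (\<i> * of_real t) * E t)"
    by (rule abs_Im_le_cmod)
  also have "\<dots> = cmod (E t)"
    by (simp add: norm_mult)
  finally show ?thesis .
qed

lemma Si_le: "0 \<le> t \<Longrightarrow> Si t \<le> t"
  using DERIV_nonpos_imp_nonincreasing[of 0 t "\<lambda>x. Si x - x"] DERIV_diff[OF DERIV_Si DERIV_ident]
    abs_sinc_le_1 by (force simp: Si_0 abs_le_iff)

lemma arctan_less_Si:
  fixes t :: real
  assumes "0 < t" "t \<le> 1"
  shows "arctan t < Si t"
proof -
  have "(\<lambda>x. Si x - arctan x) 0 < (\<lambda>x. Si x - arctan x) t"
  proof (rule DERIV_pos_imp_increasing_open[OF assms(1)])
    fix x :: real assume x: "0 < x" "x < t"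
    have "x - x ^ 3 / 6 \<le> sin x"
      using sin_ge_Maclaurin[of x 1] x assms pi_gt3 by (simp add: sin_coeff_Suc cos_coeff_Suc eval_nat_numeral)
    moreover have "x < (x - x ^ 3 / 6) * (1 + x\<^sup>2)"
    proof -
      have "x\<^sup>2 \<le> 1"
        using x assms by (simp add: power_le_one)
      then have "0 < x ^ 3 * (5 - x\<^sup>2) / 6"
        using x by simp
      then show ?thesis
        by (simp add: algebra_simps power2_eq_square power3_eq_cube)
    qed
    ultimately have "x < sin x * (1 + x\<^sup>2)"
      by (smt (verit) mult_right_mono zero_le_power2)
    then have "1 / (1 + x\<^sup>2) < sinc x"
      using x by (simp add: field_simps add_pos_nonneg)
    then show "\<exists>y. ((\<lambda>x. Si x - arctan x) has_real_derivative y) (at x) \<and> 0 < y"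
      using DERIV_diff[OF DERIV_Si DERIV_arctan, of x] by (auto simp: inverse_eq_divide)
  qed (intro continuous_intros continuous_at_imp_continuous_on ballI isCont_Si)
  then show ?thesis
    by (simp add: Si_0)
qed

lemma abs_si_less_arccot:
  fixes t :: real
  assumes t: "0 < t"
  shows "\<bar>si t\<bar> < arccot t"
proof (cases "99 / 100 < t")
  case True
  then show ?thesis
    using abs_si_le_norm_E[OF t] norm_E_less_arccot[OF True] by linarith
next
  case False
  then have "Si t \<le> t" "t < pi / 2" "arctan t < Si t"
    using t pi_gt3 by (auto intro: Si_le arctan_less_Si)
  then show ?thesis
    by (simp add: si_eq_Si arccot_def)
qed

theorem proposition3:
  shows "(\<forall>t::real. t > 0 \<longrightarrow> cmod (E t) < M t)
    \<and> (\<exists>t0 t1::real. 0 < t1 \<and> t1 < t0 \<and> t0 < 1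
          \<and> (\<forall>t. t > t0 \<longrightarrow> M t < arccot t)
          \<and> (\<forall>t. t > t1 \<longrightarrow> cmod (E t) < arccot t))
    \<and> (\<forall>t::real. t \<ge> 0 \<longrightarrow> \<bar>si t\<bar> \<le> arccot t \<and> (\<bar>si t\<bar> = arccot t \<longleftrightarrow> t = 0))"
proof (intro conjI allI impI)
  show "cmod (E t) < M t" if "t > 0" for t
    using norm_E_less_M[OF that] .
  show "\<exists>t0 t1::real. 0 < t1 \<and> t1 < t0 \<and> t0 < 1
          \<and> (\<forall>t. t > t0 \<longrightarrow> M t < arccot t) \<and> (\<forall>t. t > t1 \<longrightarrow> cmod (E t) < arccot t)"
    using M_less_arccot norm_E_less_arccot by (intro exI[of _ "199 / 200"] exI[of _ "99 / 100"]) auto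
  fix t :: real
  assume "t \<ge> 0"
  moreover have "\<bar>si 0\<bar> = arccot 0"
    by (simp add: si_eq_Si Si_0 arccot_def)
  ultimately show "\<bar>si t\<bar> \<le> arccot t" "\<bar>si t\<bar> = arccot t \<longleftrightarrow> t = 0"
    using abs_si_less_arccot[of t] by (cases "t = 0"; force)+
qed

end
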